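(* Suppose Assumptions RA and ER hold. Then the identified set $\Theta_I(p_{df})$ for the proportion of defiers $p_{df}$ is $$\Theta_I(p_{df})=\Big[\max\Big\{\max_{s\in\{0,1\}}\sup_{A}\big\{\mathbb P(Y\in A,D=s\mid Z=1-s)-\mathbb P(Y\in A,D=s\mid Z=s)\big\},\,0\Big\},\ \min\{\mathbb E[D\mid Z=0],\mathbb E[1-D\mid Z=1]\}\Big]$$ (the supremum being over Borel sets $A\subseteq\mathcal Y$) if $$\max_{d\in\{0,1\}}\int_{\mathcal Y}\sup_{z\in\{0,1\}} f_{Y,D\mid Z}(y,d\mid z)\,d\mu(y)\le 1,$$ and $\Theta_I(p_{df})=\emptyset$ otherwise. In particular, the last displayed inequality is implied by Assumptions RA and ER.
   Context: Setup: $Z\in\{0,1\}$ is a binary instrument with $0<\mathbb P(Z=1)<1$, $D\in\{0,1\}$ a binary treatment, $Y$ a real outcome with support $\mathcal Y$. Latent variables: potential treatments $D_0,D_1\in\{0,1\}$ and potential outcomes $Y_{dz}$, $d,z\in\{0,1\}$ (outcome if treatment set to $d$ and instrument set to $z$). Observed data satisfy $D=D_1Z+D_0(1-Z)$ and $Y=(Y_{11}Z+Y_{10}(1-Z))D+(Y_{01}Z+Y_{00}(1-Z))(1-D)$. The type is $T=(D_0,D_1)$: always-takers $a=(1,1)$, never-takers $n=(0,0)$, compliers $c=(0,1)$, defiers $df=(1,0)$; $p_t=\mathbb P(T=t)$. Assumptions: RA (random assignment): $Z$ is independent of $(Y_{11},Y_{10},Y_{01},Y_{00},D_1,D_0)$.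 ER (exclusion restriction): $Y_{dz}=Y_{dz'}\equiv Y_d$ for all $d,z,z'$. MON (monotonicity): either $D_1\ge D_0$ (a.s.) or $D_0\ge D_1$ (a.s.). $f_{Y,D\mid Z}(y,d\mid z)\equiv f_{Y\mid D,Z}(y\mid d,z)\mathbb P(D=d\mid Z=z)$, where $f_{Y\mid D,Z}$ is the conditional density of $Y$ given $D=d,Z=z$ with respect to a known dominating measure $\mu$ on $\mathcal Y$. The identified set of a parameter under a set of assumptions is the set of values the parameter takes over all joint distributions of the latent variables and $Z$ that satisfy the assumptions and generate, through the model, the observed distribution of $(Y,D,Z)$; bounds are sharp if they coincide with the identified set. *)

theory Defs
  imports "HOL-Probability.Probability"
begin

text \<open>
  Observed data: a probability law on triples (Y, D, Z) :: real \<times> bool \<times> bool,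
  with True encoding the value 1 and False the value 0.
  Latent data: a probability law on
    (((Y11, Y10, Y01, Y00), (D0, D1)), Z)
  where Ydz is the potential outcome with treatment d and instrument z.
\<close>

type_synonym obs = "real \<times> bool \<times> bool"
type_synonym latent = "(real \<times> real \<times> real \<times> real) \<times> (bool \<times> bool)"
type_synonym omega = "latent \<times> bool"

definition obsM :: "obs measure" where
  "obsM = borel \<Otimes>\<^sub>M count_space UNIV \<Otimes>\<^sub>M count_space UNIV"

definition latentM :: "latent measure" where
  "latentM = (borel :: (real \<times> real \<times> real \<times> real) measure) \<Otimes>\<^sub>M count_space UNIV"

definition omegaM :: "omega measure" where
  "omegaM = latentM \<Otimes>\<^sub>M count_space UNIV"

definition Y11 :: "omega \<Rightarrow> real" where "Y11 w = fst (fst (fst w))"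
definition Y10 :: "omega \<Rightarrow> real" where "Y10 w = fst (snd (fst (fst w)))"
definition Y01 :: "omega \<Rightarrow> real" where "Y01 w = fst (snd (snd (fst (fst w))))"
definition Y00 :: "omega \<Rightarrow> real" where "Y00 w = snd (snd (snd (fst (fst w))))"
definition D0 :: "omega \<Rightarrow> bool" where "D0 w = fst (snd (fst w))"
definition D1 :: "omega \<Rightarrow> bool" where "D1 w = snd (snd (fst w))"
definition Zv :: "omega \<Rightarrow> bool" where "Zv w = snd w"

definition Dobs :: "omega \<Rightarrow> bool" where
  "Dobs w = (if Zv w then D1 w else D0 w)"

definition Yobs :: "omega \<Rightarrow> real" where
  "Yobs w = (if Dobs w then (if Zv w then Y11 w else Y10 w)
                       else (if Zv w then Y01 w else Y00 w))"

definition obs_map :: "omega \<Rightarrow> obs" where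
  "obs_map w = (Yobs w, Dobs w, Zv w)"

definition RA :: "omega measure \<Rightarrow> bool" where
  "RA L \<longleftrightarrow> prob_space.indep_set L
      {fst -` A \<inter> space L | A. A \<in> sets latentM}
      {Zv -` B \<inter> space L | B. B \<in> sets (count_space (UNIV :: bool set))}"

definition ER :: "omega measure \<Rightarrow> bool" where
  "ER L \<longleftrightarrow> (AE w in L. Y11 w = Y10 w \<and> Y01 w = Y00 w)"

definition p_df :: "omega measure \<Rightarrow> real" where
  "p_df L = measure L {w \<in> space L. D0 w \<and> \<not> D1 w}"

definition identified_set_pdf :: "obs measure \<Rightarrow> real set" where
  "identified_set_pdf P =
     {p_df L | L. prob_space L \<and> sets L = sets omegaM \<and> RA L \<and> ER L
                  \<and> distr L obsM obs_map = P}"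

definition cprob :: "obs measure \<Rightarrow> real set \<Rightarrow> bool \<Rightarrow> bool \<Rightarrow> real" where
  "cprob P A d z =
     measure P {(y, d', z'). y \<in> A \<and> d' = d \<and> z' = z} / measure P {(y, d', z'). z' = z}"

definition cprobD :: "obs measure \<Rightarrow> bool \<Rightarrow> bool \<Rightarrow> real" where
  "cprobD P d z = cprob P UNIV d z"

definition lower_pdf :: "obs measure \<Rightarrow> real" where
  "lower_pdf P = max (Max ((\<lambda>s. SUP A \<in> sets (borel :: real measure).
                              cprob P A s (\<not> s) - cprob P A s s) ` UNIV)) 0"

definition upper_pdf :: "obs measure \<Rightarrow> real" where
  "upper_pdf P = min (cprobD P True False) (cprobD P False True)"

end

theory Submission
  imports Defs
begin

text \<open>Under RA and ER, P(Y \<in> A, D = d | Z = z) is the probability of the latent event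
  {D_z = d, Y_d \<in> A}.  The event for z = \<not>d is contained in the one for z = d together with
  the defiers, which gives the lower bound; the defiers receive d under Z = 0 and 1 - d under
  Z = 1, which gives the upper bound.

  Conversely, for p between the bounds we construct a latent law with p_df = p.  Always- and
  never-takers, of mass P(D = d | Z = \<not>d) - p, get an outcome density proportional to the
  overlap min (f(.,d,0), f(.,d,1)); this is dominated by both observed densities precisely
  because p is above the lower bound, since the overlap integrates to
  P(D = d | Z = \<not>d) minus the supremum in the lower bound.  Compliers and defiers take the
  residual densities, outcomes are independent given the type, and Z is drawn independently.
  Finally, if some integral of max (f(.,d,0), f(.,d,1)) exceeds 1, the lower bound exceeds the
  upper bound and the identified set is empty.\<close>

section \<open>The potential outcomes model\<close>

lemma latentM_eq: "latentM = (borel \<Otimes>\<^sub>M borel \<Otimes>\<^sub>M borel \<Otimes>\<^sub>M borel) \<Otimes>\<^sub>M count_space UNIV"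
  unfolding latentM_def by (simp add: borel_prod)

lemma obsM_eq: "obsM = borel \<Otimes>\<^sub>M count_space UNIV"
  unfolding obsM_def by (simp add: pair_measure_countable)

lemma space_latentM [simp]: "space latentM = UNIV"
  unfolding latentM_eq by (simp add: space_pair_measure)

lemma space_omegaM [simp]: "space omegaM = UNIV"
  unfolding omegaM_def by (simp add: space_pair_measure)

lemma space_obsM [simp]: "space obsM = UNIV"
  unfolding obsM_def by (simp add: space_pair_measure)

lemma measurable_latent_type [measurable]: "snd \<in> measurable latentM (count_space UNIV)"
  unfolding latentM_eq by (rule measurable_snd)

lemma measurable_fst_omegaM [measurable]: "fst \<in> measurable omegaM latentM"
  unfolding omegaM_def by (rule measurable_fst)

lemma Zv_eq_snd: "Zv = snd"
  by (rule ext) (simp add: Zv_def)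

lemma measurable_Zv [measurable]: "Zv \<in> measurable omegaM (count_space UNIV)"
  unfolding omegaM_def Zv_eq_snd by (rule measurable_snd)

lemma measurable_D [measurable]:
  "D0 \<in> measurable omegaM (count_space UNIV)" "D1 \<in> measurable omegaM (count_space UNIV)"
  unfolding D0_def D1_def
  by (rule measurable_compose[OF measurable_compose[OF measurable_fst_omegaM measurable_latent_type]],
      simp)+

lemma measurable_Y [measurable]:
  "Y11 \<in> borel_measurable omegaM" "Y10 \<in> borel_measurable omegaM"
  "Y01 \<in> borel_measurable omegaM" "Y00 \<in> borel_measurable omegaM"
  unfolding omegaM_def latentM_eq Y11_def Y10_def Y01_def Y00_def by measurable

lemma measurable_obs_map [measurable]: "obs_map \<in> measurable omegaM obsM"
  unfolding obsM_def obs_map_def Yobs_def Dobs_def by measurable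

text \<open>Under ER only the outcomes Y11 and Y01 matter; they serve as Y1 and Y0.\<close>

definition treatment :: "bool \<Rightarrow> latent \<Rightarrow> bool" where
  "treatment z l = (if z then snd (snd l) else fst (snd l))"

definition outcome :: "bool \<Rightarrow> latent \<Rightarrow> real" where
  "outcome d l = (if d then fst (fst l) else fst (snd (snd (fst l))))"

definition response :: "bool \<Rightarrow> bool \<Rightarrow> real set \<Rightarrow> latent set" where
  "response d z A = {l. treatment z l = d \<and> outcome d l \<in> A}"

definition defiers :: "latent set" where
  "defiers = {l. treatment False l \<and> \<not> treatment True l}"

definition obs_cell :: "real set \<Rightarrow> bool \<Rightarrow> bool \<Rightarrow> obs set" where
  "obs_cell A d z = {(y, d', z'). y \<in> A \<and> d' = d \<and> z' = z}"

definition obs_arm :: "bool \<Rightarrow> obs set" where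
  "obs_arm z = {(y, d, z'). z' = z}"

lemma measurable_treatment [measurable]: "treatment z \<in> measurable latentM (count_space UNIV)"
  unfolding treatment_def by (rule measurable_compose[OF measurable_latent_type]) simp

lemma measurable_outcome [measurable]: "outcome d \<in> borel_measurable latentM"
  unfolding outcome_def latentM_eq by (cases d) simp_all

lemma sets_response: "A \<in> sets borel \<Longrightarrow> response d z A \<in> sets latentM"
proof -
  assume [measurable]: "A \<in> sets borel"
  have "{l \<in> space latentM. treatment z l = d \<and> outcome d l \<in> A} \<in> sets latentM"
    by measurable
  then show ?thesis by (simp add: response_def)
qed

lemma sets_defiers: "defiers \<in> sets latentM"
proof -
  have "{l \<in> space latentM. treatment False l \<and> \<not> treatment True l} \<in> sets latentM"
    by measurable
  then show ?thesis by (simp add: defiers_def)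
qed

lemma sets_obs_cell: "A \<in> sets borel \<Longrightarrow> obs_cell A d z \<in> sets obsM"
proof -
  assume "A \<in> sets borel"
  moreover have "obs_cell A d z = A \<times> {(d, z)}" by (auto simp: obs_cell_def)
  ultimately show ?thesis unfolding obsM_eq by (auto intro!: pair_measureI)
qed

lemma sets_obs_arm: "obs_arm z \<in> sets obsM"
proof -
  have "obs_arm z = UNIV \<times> (UNIV \<times> {z})" by (auto simp: obs_arm_def)
  then show ?thesis unfolding obsM_eq by (auto intro!: pair_measureI)
qed

lemma sets_fst_vimage:
  assumes "sets L = sets omegaM" "S \<in> sets latentM"
  shows "fst -` S \<in> sets L"
  using measurable_sets[OF measurable_fst_omegaM assms(2)] assms(1) by simp

lemma cprob_eq_cell_div_arm: "cprob P A d z = measure P (obs_cell A d z) / measure P (obs_arm z)"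
  by (simp add: cprob_def obs_cell_def obs_arm_def)

lemma p_df_eq_defiers:
  assumes "sets L = sets omegaM"
  shows "p_df L = measure L (fst -` defiers)"
  using sets_eq_imp_space_eq[OF assms]
  by (simp add: p_df_def defiers_def treatment_def D0_def D1_def vimage_def)

lemma UNIV_bool_pair:
  "(UNIV :: (bool \<times> bool) set) = {(True, True), (True, False), (False, True), (False, False)}"
  by auto

lemma sets_type_outcome_event:
  assumes "A \<in> sets borel"
  shows "{l. Q (snd l) \<and> outcome d l \<in> A} \<in> sets latentM"
proof -
  have [measurable]: "(\<lambda>l::latent. Q (snd l)) \<in> measurable latentM (count_space UNIV)"
    by (rule measurable_compose[OF measurable_latent_type]) simp
  have "{l \<in> space latentM. Q (snd l) \<and> outcome d l \<in> A} \<in> sets latentM"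
    using assms by measurable
  then show ?thesis by simp
qed

lemma measure_eq_obsM_cells:
  assumes M: "sets M = sets obsM" and N: "sets N = sets obsM"
    and cells: "\<And>A d z. A \<in> sets borel \<Longrightarrow> emeasure M (obs_cell A d z) = emeasure N (obs_cell A d z)"
  shows "M = N"
proof (rule measure_eqI)
  show "sets M = sets N" using M N by simp
  fix X assume X: "X \<in> sets M"
  define slice where "slice i = (\<lambda>y. (y, fst i, snd i)) -` X" for i :: "bool \<times> bool"
  have sets_slice: "slice i \<in> sets borel" for i
  proof -
    have "(\<lambda>y. (y, fst i, snd i)) \<in> measurable borel obsM" unfolding obsM_eq by measurable
    from measurable_sets[OF this, of X] show ?thesis using X M by (simp add: slice_def)
  qed
  have X_eq: "X = (\<Union>i. obs_cell (slice i) (fst i) (snd i))"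
    by (auto simp: obs_cell_def slice_def)
  have disj: "disjoint_family (\<lambda>i. obs_cell (slice i) (fst i) (snd i))"
    by (auto simp: disjoint_family_on_def obs_cell_def)
  have "emeasure M X = (\<Sum>i\<in>UNIV. emeasure M (obs_cell (slice i) (fst i) (snd i)))"
    unfolding X_eq using sets_obs_cell[OF sets_slice] M disj
    by (subst sum_emeasure) auto
  also have "\<dots> = (\<Sum>i\<in>UNIV. emeasure N (obs_cell (slice i) (fst i) (snd i)))"
    using cells sets_slice by simp
  also have "\<dots> = emeasure N X"
    unfolding X_eq using sets_obs_cell[OF sets_slice] N disj
    by (subst sum_emeasure) auto
  finally show "emeasure M X = emeasure N X" .
qed

section \<open>Necessity of the bounds\<close>

text \<open>Under ER the observed cell {Y \<in> A, D = d, Z = z} is, up to a null set, the event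
  that the latent variables lie in response d z A and Z = z; RA then factorizes its probability.\<close>

lemma cprob_eq_prob_response:
  assumes L: "prob_space L" "sets L = sets omegaM" "RA L" "ER L" "distr L obsM obs_map = P"
    and arm_pos: "0 < measure P (obs_arm z)" and A: "A \<in> sets borel"
  shows "cprob P A d z = measure L (fst -` response d z A)"
proof -
  interpret prob_space L by fact
  have space_L: "space L = UNIV" using sets_eq_imp_space_eq[OF L(2)] by simp
  note meas_L = measurable_cong_sets[OF L(2) refl]
  have obs_L [measurable]: "obs_map \<in> measurable L obsM" using measurable_obs_map by (simp add: meas_L)
  have resp_L: "fst -` response d z A \<in> events"
    using sets_fst_vimage[OF L(2) sets_response[OF A]] .
  have arm_L: "Zv -` {z} \<in> events"
    using measurable_sets[OF measurable_Zv, of "{z}"] L(2) by simp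
  have cell: "measure P (obs_cell A d z) = prob (obs_map -` obs_cell A d z)"
    using measure_distr[OF obs_L sets_obs_cell[OF A]] L(5) space_L by simp
  have arm: "measure P (obs_arm z) = prob (Zv -` {z})"
  proof -
    have "obs_map -` obs_arm z = Zv -` {z}" by (auto simp: obs_map_def obs_arm_def)
    then show ?thesis using measure_distr[OF obs_L sets_obs_arm] L(5) space_L by simp
  qed
  have "AE w in L. w \<in> obs_map -` obs_cell A d z \<longleftrightarrow> w \<in> fst -` response d z A \<inter> Zv -` {z}"
    using L(4) unfolding ER_def
    by (rule eventually_mono)
      (auto simp: obs_map_def obs_cell_def response_def Yobs_def Dobs_def treatment_def outcome_def
        Y11_def Y10_def Y01_def Y00_def D0_def D1_def Zv_def split: if_splits)
  then have "prob (obs_map -` obs_cell A d z) = prob (fst -` response d z A \<inter> Zv -` {z})"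
    by (rule measure_eq_AE) (use measurable_sets[OF obs_L sets_obs_cell[OF A]] space_L resp_L arm_L in auto)
  also have "\<dots> = prob (fst -` response d z A) * prob (Zv -` {z})"
  proof (rule indep_setD)
    show "indep_set {fst -` A \<inter> space L | A. A \<in> sets latentM}
        {Zv -` B \<inter> space L | B. B \<in> sets (count_space (UNIV :: bool set))}"
      using L(3) by (simp add: RA_def)
    show "fst -` response d z A \<in> {fst -` A \<inter> space L | A. A \<in> sets latentM}"
      using sets_response[OF A] space_L by auto
    show "Zv -` {z} \<in> {Zv -` B \<inter> space L | B. B \<in> sets (count_space (UNIV :: bool set))}"
      using space_L by auto
  qed
  finally show ?thesis using cell arm arm_pos by (simp add: cprob_eq_cell_div_arm)
qed

lemma response_subset_defiers:
  "response d (\<not> d) A \<subseteq> response d d A \<union> defiers"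
  "defiers \<subseteq> response True False UNIV" "defiers \<subseteq> response False True UNIV"
  by (cases d; auto simp: response_def defiers_def treatment_def)+

lemma p_df_bounds:
  assumes L: "prob_space L" "sets L = sets omegaM" "RA L" "ER L" "distr L obsM obs_map = P"
    and arm_pos: "\<And>z. 0 < measure P (obs_arm z)"
  shows "A \<in> sets borel \<Longrightarrow> cprob P A d (\<not> d) - cprob P A d d \<le> p_df L"
    and "p_df L \<le> cprob P UNIV True False" and "p_df L \<le> cprob P UNIV False True"
proof -
  interpret prob_space L by fact
  note event = sets_fst_vimage[OF L(2)]
  note response_prob = cprob_eq_prob_response[OF L arm_pos]
  note p_df = p_df_eq_defiers[OF L(2)]
  have mono: "prob (fst -` S) \<le> prob (fst -` T)" if "S \<subseteq> T" "T \<in> sets latentM" for S T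
    using that event by (intro finite_measure_mono) auto
  show "p_df L \<le> cprob P UNIV True False" "p_df L \<le> cprob P UNIV False True"
    using mono[OF response_subset_defiers(2) sets_response] mono[OF response_subset_defiers(3) sets_response]
      response_prob p_df by simp_all
  assume A: "A \<in> sets borel"
  have "fst -` response d (\<not> d) A \<subseteq> fst -` response d d A \<union> fst -` defiers"
    using response_subset_defiers(1) by blast
  then have "prob (fst -` response d (\<not> d) A) \<le> prob (fst -` response d d A \<union> fst -` defiers)"
    using event sets_response[OF A] sets_defiers by (intro finite_measure_mono) auto
  also have "\<dots> \<le> prob (fst -` response d d A) + prob (fst -` defiers)"
    using event sets_response[OF A] sets_defiers by (intro measure_Un_le) auto
  finally show "cprob P A d (\<not> d) - cprob P A d d \<le> p_df L"
    using response_prob[OF A] p_df by simp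
qed

section \<open>The observed law\<close>

lemma nn_integral_if_set:
  assumes "B \<in> sets M" "f \<in> borel_measurable M" "g \<in> borel_measurable M"
  shows "(\<integral>\<^sup>+ x. (if x \<in> B then f x else g x) \<partial>M)
    = (\<integral>\<^sup>+ x \<in> B. f x \<partial>M) + (\<integral>\<^sup>+ x \<in> space M - B. g x \<partial>M)"
proof -
  have "(\<integral>\<^sup>+ x. (if x \<in> B then f x else g x) \<partial>M)
      = (\<integral>\<^sup>+ x. f x * indicator B x + g x * indicator (space M - B) x \<partial>M)"
    by (intro nn_integral_cong) (simp add: indicator_def)
  also have "\<dots> = (\<integral>\<^sup>+ x \<in> B. f x \<partial>M) + (\<integral>\<^sup>+ x \<in> space M - B. g x \<partial>M)"
    using assms by (intro nn_integral_add) auto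
  finally show ?thesis .
qed

locale observed_law =
  fixes P :: "obs measure" and \<mu> :: "real measure"
    and f :: "real \<Rightarrow> bool \<Rightarrow> bool \<Rightarrow> real"
  assumes P_prob: "prob_space P"
    and P_sets: "sets P = sets obsM"
    and Z_nondeg: "0 < measure P {(y, d, z). z}" "measure P {(y, d, z). z} < 1"
    and mu_sets: "sets \<mu> = sets borel"
    and mu_sf: "sigma_finite_measure \<mu>"
    and f_meas: "\<And>d z. (\<lambda>y. f y d z) \<in> borel_measurable borel"
    and f_density: "\<And>A d z. A \<in> sets borel \<Longrightarrow>
          ennreal (cprob P A d z) = (\<integral>\<^sup>+ y \<in> A. ennreal (f y d z) \<partial>\<mu>)"
begin

sublocale P: prob_space P by (fact P_prob)

lemma space_P: "space P = UNIV"
  using sets_eq_imp_space_eq[OF P_sets] by simp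

lemma space_mu: "space \<mu> = UNIV"
  using sets_eq_imp_space_eq[OF mu_sets] by simp

lemma sets_obs_cell_P: "A \<in> sets borel \<Longrightarrow> obs_cell A d z \<in> sets P"
  using sets_obs_cell P_sets by simp

lemma sets_obs_arm_P: "obs_arm z \<in> sets P"
  using sets_obs_arm P_sets by simp

lemma measure_obs_arm_False: "measure P (obs_arm False) = 1 - measure P (obs_arm True)"
proof -
  have "obs_arm False = space P - obs_arm True" by (auto simp: obs_arm_def space_P)
  then show ?thesis using P.prob_compl[OF sets_obs_arm_P] by simp
qed

lemma arm_prob_pos: "0 < measure P (obs_arm z)"
proof -
  have "obs_arm True = {(y, d, z). z}" by (auto simp: obs_arm_def)
  then show ?thesis using Z_nondeg measure_obs_arm_False by (cases z) simp_all
qed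

lemma cprob_nonneg: "0 \<le> cprob P A d z"
  by (simp add: cprob_eq_cell_div_arm)

lemma cprob_le_1: "cprob P A d z \<le> 1"
proof -
  have "measure P (obs_cell A d z) \<le> measure P (obs_arm z)"
    by (rule P.finite_measure_mono[OF _ sets_obs_arm_P]) (auto simp: obs_cell_def obs_arm_def)
  then show ?thesis using arm_prob_pos[of z] by (simp add: cprob_eq_cell_div_arm)
qed

lemma cprob_Un_Compl:
  assumes "B \<in> sets borel"
  shows "cprob P UNIV d z = cprob P B d z + cprob P (- B) d z"
proof -
  have "obs_cell UNIV d z = obs_cell B d z \<union> obs_cell (- B) d z"
    "obs_cell B d z \<inter> obs_cell (- B) d z = {}"
    by (auto simp: obs_cell_def)
  moreover have "- B \<in> sets borel" using assms by (metis borel_comp)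
  ultimately show ?thesis
    using P.finite_measure_Union[OF sets_obs_cell_P[OF assms] sets_obs_cell_P]
    by (simp add: cprob_eq_cell_div_arm add_divide_distrib)
qed

lemma cprob_treatment_sum: "cprob P UNIV True z + cprob P UNIV False z = 1"
proof -
  have "obs_arm z = obs_cell UNIV True z \<union> obs_cell UNIV False z"
    "obs_cell UNIV True z \<inter> obs_cell UNIV False z = {}"
    by (auto simp: obs_cell_def obs_arm_def)
  then show ?thesis
    using P.finite_measure_Union[OF sets_obs_cell_P sets_obs_cell_P] arm_prob_pos[of z]
    by (simp add: cprob_eq_cell_div_arm add_divide_distrib[symmetric])
qed

lemma cprob_diff_le_lower_pdf:
  assumes "B \<in> sets borel"
  shows "cprob P B d (\<not> d) - cprob P B d d \<le> lower_pdf P"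
proof -
  have "bdd_above ((\<lambda>A. cprob P A d (\<not> d) - cprob P A d d) ` sets borel)"
  proof (rule bdd_aboveI[where M=1], clarify)
    fix A :: "real set"
    show "cprob P A d (\<not> d) - cprob P A d d \<le> 1"
      using cprob_le_1[of A d "\<not> d"] cprob_nonneg[of A d d] by linarith
  qed
  then have "cprob P B d (\<not> d) - cprob P B d d
      \<le> (SUP A \<in> sets borel. cprob P A d (\<not> d) - cprob P A d d)"
    using assms by (rule cSUP_upper2) simp
  also have "\<dots> \<le> lower_pdf P"
    unfolding lower_pdf_def by (intro max.coboundedI1 Max_ge) auto
  finally show ?thesis .
qed

lemma lower_pdf_le:
  assumes "\<And>A d. A \<in> sets borel \<Longrightarrow> cprob P A d (\<not> d) - cprob P A d d \<le> p" and "0 \<le> p"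
  shows "lower_pdf P \<le> p"
  unfolding lower_pdf_def using assms
  by (auto intro!: max.boundedI cSUP_least simp: Max_le_iff)

lemma upper_pdf_le: "upper_pdf P \<le> cprob P UNIV (\<not> d) d"
  unfolding upper_pdf_def cprobD_def by (cases d) auto

lemma measurable_f_mu [measurable]: "(\<lambda>y. f y d z) \<in> borel_measurable \<mu>"
  using f_meas measurable_cong_sets[OF mu_sets refl] by blast

definition excess_set :: "bool \<Rightarrow> real set" where
  "excess_set d = {y. f y d d < f y d (\<not> d)}"

lemma sets_excess_set: "excess_set d \<in> sets borel"
proof -
  have "{y \<in> space borel. f y d d < f y d (\<not> d)} \<in> sets borel"
    by (intro borel_measurable_less f_meas)
  then show ?thesis by (simp add: excess_set_def)
qed

lemma nn_integral_excess_split: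
  "(\<integral>\<^sup>+ y. (if y \<in> excess_set d then ennreal (f y d z) else ennreal (f y d z')) \<partial>\<mu>)
    = ennreal (cprob P (excess_set d) d z + cprob P (- excess_set d) d z')"
proof -
  have E: "excess_set d \<in> sets \<mu>" using sets_excess_set mu_sets by simp
  have "- excess_set d \<in> sets borel" using sets_excess_set by (metis borel_comp)
  moreover have "space \<mu> - excess_set d = - excess_set d" by (simp add: space_mu Compl_eq_Diff_UNIV)
  ultimately have "(\<integral>\<^sup>+ y. (if y \<in> excess_set d then ennreal (f y d z) else ennreal (f y d z')) \<partial>\<mu>)
      = ennreal (cprob P (excess_set d) d z) + ennreal (cprob P (- excess_set d) d z')"
    using nn_integral_if_set[OF E] sets_excess_set by (simp only: f_density) simp
  then show ?thesis by (simp add: ennreal_plus cprob_nonneg)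
qed

lemma nn_integral_max_density:
  "(\<integral>\<^sup>+ y. ennreal (max (f y d False) (f y d True)) \<partial>\<mu>)
    = ennreal (cprob P (excess_set d) d (\<not> d) + cprob P (- excess_set d) d d)"
  unfolding nn_integral_excess_split[symmetric]
  by (intro nn_integral_cong) (cases d; auto simp: excess_set_def max_def)

lemma nn_integral_min_density:
  "(\<integral>\<^sup>+ y. ennreal (min (f y d d) (f y d (\<not> d))) \<partial>\<mu>)
    = ennreal (cprob P (excess_set d) d d + cprob P (- excess_set d) d (\<not> d))"
  unfolding nn_integral_excess_split[symmetric]
  by (intro nn_integral_cong) (auto simp: excess_set_def min_def)

lemma upper_pdf_less_lower_pdf:
  assumes "\<not> (\<integral>\<^sup>+ y. ennreal (max (f y d False) (f y d True)) \<partial>\<mu>) \<le> 1"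
  shows "upper_pdf P < lower_pdf P"
proof -
  have "1 < cprob P (excess_set d) d (\<not> d) + cprob P (- excess_set d) d d"
    using assms unfolding nn_integral_max_density by (metis ennreal_le_1 not_le_imp_less)
  moreover have "cprob P UNIV (\<not> d) d = 1 - cprob P UNIV d d"
    using cprob_treatment_sum[of d] by (cases d) auto
  ultimately have "cprob P UNIV (\<not> d) d
      < cprob P (excess_set d) d (\<not> d) - cprob P (excess_set d) d d"
    using cprob_Un_Compl[OF sets_excess_set[of d], of d d] by linarith
  then show ?thesis
    using upper_pdf_le[of d] cprob_diff_le_lower_pdf[OF sets_excess_set[of d], of d] by linarith
qed

lemma cprob_minus_le_nn_integral_min:
  assumes "lower_pdf P \<le> p"
  shows "ennreal (cprob P UNIV d (\<not> d) - p) \<le> (\<integral>\<^sup>+ y. ennreal (min (f y d d) (f y d (\<not> d))) \<partial>\<mu>)"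
  unfolding nn_integral_min_density
  using cprob_Un_Compl[OF sets_excess_set[of d], of d "\<not> d"] assms
    cprob_diff_le_lower_pdf[OF sets_excess_set[of d], of d]
  by (intro ennreal_leI) linarith

end

section \<open>Sharpness of the bounds\<close>

lemma nn_integral_pair_product:
  assumes "sigma_finite_measure N" "u \<in> borel_measurable M" "v \<in> borel_measurable N"
  shows "(\<integral>\<^sup>+ x. u (fst x) * v (snd x) \<partial>(M \<Otimes>\<^sub>M N)) = (\<integral>\<^sup>+ x. u x \<partial>M) * (\<integral>\<^sup>+ y. v y \<partial>N)"
proof -
  interpret N: sigma_finite_measure N by fact
  have "(\<integral>\<^sup>+ x. u (fst x) * v (snd x) \<partial>(M \<Otimes>\<^sub>M N)) = (\<integral>\<^sup>+ x. \<integral>\<^sup>+ y. u x * v y \<partial>N \<partial>M)"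
    using assms(2,3) by (subst N.nn_integral_fst[symmetric]) simp_all
  also have "\<dots> = (\<integral>\<^sup>+ x. u x * (\<integral>\<^sup>+ y. v y \<partial>N) \<partial>M)"
    using assms(3) by (simp add: nn_integral_cmult)
  also have "\<dots> = (\<integral>\<^sup>+ x. u x \<partial>M) * (\<integral>\<^sup>+ y. v y \<partial>N)"
    using assms(2) by (rule nn_integral_multc)
  finally show ?thesis .
qed

text \<open>For m = 0 both sides vanish, since 0 / 0 = 0 in ennreal.\<close>

lemma nn_integral_normalized_product_marginals:
  assumes M: "sigma_finite_measure M"
    and [measurable]: "u \<in> borel_measurable M" "v \<in> borel_measurable M" "A \<in> sets M"
    and mass: "(\<integral>\<^sup>+ x. u x \<partial>M) = m" "(\<integral>\<^sup>+ x. v x \<partial>M) = m" "m \<noteq> \<infinity>"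
  shows "(\<integral>\<^sup>+ x. u (fst x) * v (snd x) / m * indicator A (fst x) \<partial>(M \<Otimes>\<^sub>M M)) = (\<integral>\<^sup>+ x \<in> A. u x \<partial>M)"
    and "(\<integral>\<^sup>+ x. u (fst x) * v (snd x) / m * indicator A (snd x) \<partial>(M \<Otimes>\<^sub>M M)) = (\<integral>\<^sup>+ x \<in> A. v x \<partial>M)"
proof -
  have normalize: "c * (m / m) = c" if "c \<le> m" for c :: ennreal
    using that mass(3) by (cases "m = 0") (simp_all add: top.not_eq_extremum)
  have restrict: "(\<integral>\<^sup>+ x \<in> A. w x \<partial>M) \<le> m" if "(\<integral>\<^sup>+ x. w x \<partial>M) = m" for w
    using that[symmetric] by (auto intro!: nn_integral_mono simp: indicator_def)
  have scaled: "(\<integral>\<^sup>+ x. w x / m \<partial>M) = m / m" if "w \<in> borel_measurable M" "(\<integral>\<^sup>+ x. w x \<partial>M) = m" for w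
    using that by (simp add: divide_ennreal_def nn_integral_multc)
  have "(\<integral>\<^sup>+ x. u (fst x) * v (snd x) / m * indicator A (fst x) \<partial>(M \<Otimes>\<^sub>M M))
      = (\<integral>\<^sup>+ x. (u (fst x) * indicator A (fst x)) * (v (snd x) / m) \<partial>(M \<Otimes>\<^sub>M M))"
    by (intro nn_integral_cong) (simp add: divide_ennreal_def mult_ac)
  also have "\<dots> = (\<integral>\<^sup>+ x \<in> A. u x \<partial>M) * (m / m)"
    by (subst nn_integral_pair_product[OF M]) (simp_all add: scaled mass)
  finally show "(\<integral>\<^sup>+ x. u (fst x) * v (snd x) / m * indicator A (fst x) \<partial>(M \<Otimes>\<^sub>M M))
      = (\<integral>\<^sup>+ x \<in> A. u x \<partial>M)"
    using normalize restrict mass(1) by simp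
  have "(\<integral>\<^sup>+ x. u (fst x) * v (snd x) / m * indicator A (snd x) \<partial>(M \<Otimes>\<^sub>M M))
      = (\<integral>\<^sup>+ x. (u (fst x) / m) * (v (snd x) * indicator A (snd x)) \<partial>(M \<Otimes>\<^sub>M M))"
    by (intro nn_integral_cong) (simp add: divide_ennreal_def mult_ac)
  also have "\<dots> = (\<integral>\<^sup>+ x \<in> A. v x \<partial>M) * (m / m)"
    by (subst nn_integral_pair_product[OF M]) (simp_all add: scaled mass mult.commute)
  finally show "(\<integral>\<^sup>+ x. u (fst x) * v (snd x) / m * indicator A (snd x) \<partial>(M \<Otimes>\<^sub>M M))
      = (\<integral>\<^sup>+ x \<in> A. v x \<partial>M)"
    using normalize restrict mass(2) by simp
qed

locale defier_share = observed_law +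
  fixes p :: real
  assumes p_lower: "lower_pdf P \<le> p" and p_upper: "p \<le> upper_pdf P"
begin

text \<open>taker_mass d is the share of always-takers (d = True) or never-takers (d = False).
  Their outcome density is a multiple of the overlap of the two observed densities of Y given
  D = d, and is split off from both instrument arms.\<close>

definition taker_mass :: "bool \<Rightarrow> real" where
  "taker_mass d = cprob P UNIV d (\<not> d) - p"

definition overlap :: "bool \<Rightarrow> real \<Rightarrow> ennreal" where
  "overlap d y = ennreal (min (f y d d) (f y d (\<not> d)))"

definition taker_density :: "bool \<Rightarrow> real \<Rightarrow> ennreal" where
  "taker_density d y = ennreal (taker_mass d) / (\<integral>\<^sup>+ x. overlap d x \<partial>\<mu>) * overlap d y"

definition residual :: "bool \<Rightarrow> bool \<Rightarrow> real \<Rightarrow> ennreal" where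
  "residual d z y = ennreal (f y d z) - taker_density d y"

text \<open>The density of Y_d on type t integrates to the share of t.  Y_d of the type that never
  receives d is never observed; any density of the right mass, here taker_density (\<not> d), will do.\<close>

definition type_density :: "bool \<Rightarrow> bool \<times> bool \<Rightarrow> real \<Rightarrow> ennreal" where
  "type_density d t =
     (if t = (d, d) then taker_density d
      else if snd t = d then residual d True
      else if fst t = d then residual d False
      else taker_density (\<not> d))"

definition type_mass :: "bool \<times> bool \<Rightarrow> ennreal" where
  "type_mass t = (\<integral>\<^sup>+ y. type_density True t y \<partial>\<mu>)"

lemma p_nonneg: "0 \<le> p"
  using p_lower unfolding lower_pdf_def by linarith

lemma taker_mass_nonneg: "0 \<le> taker_mass d"
  using p_upper unfolding taker_mass_def upper_pdf_def cprobD_def by (cases d) auto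

lemma measurable_overlap [measurable]: "overlap d \<in> borel_measurable \<mu>"
  unfolding overlap_def by measurable

lemma measurable_taker_density [measurable]: "taker_density d \<in> borel_measurable \<mu>"
  unfolding taker_density_def by measurable

lemma measurable_residual [measurable]: "residual d z \<in> borel_measurable \<mu>"
  unfolding residual_def by measurable

lemma measurable_type_density [measurable]: "type_density d t \<in> borel_measurable \<mu>"
  unfolding type_density_def by simp

lemma nn_integral_f: "(\<integral>\<^sup>+ y. ennreal (f y d z) \<partial>\<mu>) = ennreal (cprob P UNIV d z)"
  using f_density[of UNIV d z] by simp

lemma taker_mass_le_overlap: "ennreal (taker_mass d) \<le> (\<integral>\<^sup>+ y. overlap d y \<partial>\<mu>)"
  using cprob_minus_le_nn_integral_min[OF p_lower, of d] unfolding overlap_def taker_mass_def .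

lemma nn_integral_overlap_finite: "(\<integral>\<^sup>+ y. overlap d y \<partial>\<mu>) < \<infinity>"
proof -
  have "(\<integral>\<^sup>+ y. overlap d y \<partial>\<mu>) \<le> (\<integral>\<^sup>+ y. ennreal (f y d d) \<partial>\<mu>)"
    unfolding overlap_def by (intro nn_integral_mono ennreal_leI) simp
  then show ?thesis unfolding nn_integral_f by (simp add: le_less_trans)
qed

lemma nn_integral_taker_density: "(\<integral>\<^sup>+ y. taker_density d y \<partial>\<mu>) = ennreal (taker_mass d)"
proof -
  have "(\<integral>\<^sup>+ y. taker_density d y \<partial>\<mu>)
      = ennreal (taker_mass d) / (\<integral>\<^sup>+ x. overlap d x \<partial>\<mu>) * (\<integral>\<^sup>+ x. overlap d x \<partial>\<mu>)"
    unfolding taker_density_def by (rule nn_integral_cmult) simp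
  also have "\<dots> = ennreal (taker_mass d)"
    using taker_mass_le_overlap[of d] nn_integral_overlap_finite[of d]
    by (cases "(\<integral>\<^sup>+ x. overlap d x \<partial>\<mu>) = 0") (simp_all add: ennreal_divide_times)
  finally show ?thesis .
qed

lemma taker_density_le_f: "taker_density d y \<le> ennreal (f y d z)"
proof -
  have "ennreal (taker_mass d) / (\<integral>\<^sup>+ x. overlap d x \<partial>\<mu>) \<le> 1"
    using taker_mass_le_overlap[of d]
    by (cases "(\<integral>\<^sup>+ x. overlap d x \<partial>\<mu>) = 0")
      (simp_all add: divide_le_posI_ennreal zero_less_iff_neq_zero)
  then have "taker_density d y \<le> overlap d y"
    unfolding taker_density_def by (metis mult_right_mono mult_1 zero_le)
  also have "\<dots> \<le> ennreal (f y d z)"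
    unfolding overlap_def by (cases "z = d") (auto intro!: ennreal_leI)
  finally show ?thesis .
qed

lemma residual_add_taker_density: "residual d z y + taker_density d y = ennreal (f y d z)"
  unfolding residual_def by (rule diff_add_cancel_ennreal[OF taker_density_le_f])

lemma set_nn_integral_residual_add_taker_density:
  assumes "A \<in> sets borel"
  shows "(\<integral>\<^sup>+ y \<in> A. residual d z y \<partial>\<mu>) + (\<integral>\<^sup>+ y \<in> A. taker_density d y \<partial>\<mu>)
    = ennreal (cprob P A d z)"
proof -
  have [measurable]: "A \<in> sets \<mu>" using assms mu_sets by simp
  have "(\<integral>\<^sup>+ y \<in> A. residual d z y \<partial>\<mu>) + (\<integral>\<^sup>+ y \<in> A. taker_density d y \<partial>\<mu>)
      = (\<integral>\<^sup>+ y \<in> A. residual d z y + taker_density d y \<partial>\<mu>)"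
    by (subst nn_integral_add[symmetric]) (simp_all add: distrib_right)
  then show ?thesis by (simp add: residual_add_taker_density f_density[OF assms])
qed

lemma nn_integral_residual: "(\<integral>\<^sup>+ y. residual d z y \<partial>\<mu>) = ennreal (cprob P UNIV d z - taker_mass d)"
proof -
  have "(\<integral>\<^sup>+ y. residual d z y \<partial>\<mu>) + ennreal (taker_mass d) = ennreal (cprob P UNIV d z)"
    using set_nn_integral_residual_add_taker_density[of UNIV d z] nn_integral_taker_density[of d]
    by simp
  then have "(\<integral>\<^sup>+ y. residual d z y \<partial>\<mu>) = ennreal (cprob P UNIV d z) - ennreal (taker_mass d)"
    by (metis ennreal_add_diff_cancel_right ennreal_neq_top)
  then show ?thesis by (simp add: ennreal_minus[OF taker_mass_nonneg])
qed

lemma nn_integral_type_density: "(\<integral>\<^sup>+ y. type_density d t y \<partial>\<mu>) = type_mass t"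
proof -
  have complier_mass: "cprob P UNIV False False - (cprob P UNIV False True - p)
      = cprob P UNIV True True - (cprob P UNIV True False - p)"
    using cprob_treatment_sum[of True] cprob_treatment_sum[of False] by linarith
  show ?thesis
    unfolding type_mass_def
    by (cases t; cases d)
      (auto simp: type_density_def nn_integral_taker_density nn_integral_residual taker_mass_def
        complier_mass)
qed

lemma type_mass_finite: "type_mass t \<noteq> \<infinity>"
  unfolding type_mass_def
  by (cases t) (simp add: type_density_def nn_integral_taker_density nn_integral_residual)

lemma type_mass_defiers: "type_mass (True, False) = ennreal p"
  unfolding type_mass_def by (simp add: type_density_def nn_integral_residual taker_mass_def)

text \<open>The latent law: a type t with unnormalized weight type_mass t, then (Y_1, Y_0) with
  joint density type_density True t \<otimes> type_density False t, embedded via Y11 = Y10 and Y01 = Y00.\<close>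

definition type_outcome_space :: "((bool \<times> bool) \<times> real \<times> real) measure" where
  "type_outcome_space = count_space UNIV \<Otimes>\<^sub>M (\<mu> \<Otimes>\<^sub>M \<mu>)"

definition latent_kernel :: "(bool \<times> bool) \<times> real \<times> real \<Rightarrow> ennreal" where
  "latent_kernel \<omega> = type_density True (fst \<omega>) (fst (snd \<omega>)) * type_density False (fst \<omega>) (snd (snd \<omega>))
     / type_mass (fst \<omega>)"

definition latent_embed :: "(bool \<times> bool) \<times> real \<times> real \<Rightarrow> latent" where
  "latent_embed \<omega> = ((fst (snd \<omega>), fst (snd \<omega>), snd (snd \<omega>), snd (snd \<omega>)), fst \<omega>)"

definition latent_law :: "latent measure" where
  "latent_law = distr (density type_outcome_space latent_kernel) latentM latent_embed"

lemma space_type_outcome_space: "space type_outcome_space = UNIV"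
  by (simp add: type_outcome_space_def space_pair_measure space_mu)

lemma measurable_latent_embed: "latent_embed \<in> measurable type_outcome_space latentM"
  unfolding type_outcome_space_def
proof (rule measurable_pair_measure_countable1)
  fix t :: "bool \<times> bool"
  have "(\<lambda>x::real \<times> real. ((fst x, fst x, snd x, snd x), t)) \<in> measurable (borel \<Otimes>\<^sub>M borel) latentM"
    unfolding latentM_eq by measurable
  then show "(\<lambda>x. latent_embed (t, x)) \<in> measurable (\<mu> \<Otimes>\<^sub>M \<mu>) latentM"
    unfolding latent_embed_def
    by (subst measurable_cong_sets[OF sets_pair_measure_cong[OF mu_sets mu_sets] refl]) simp
qed simp

lemma measurable_latent_kernel: "latent_kernel \<in> borel_measurable type_outcome_space"
  unfolding type_outcome_space_def
  by (rule measurable_pair_measure_countable1) (simp_all add: latent_kernel_def)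

lemma sets_latent_law [measurable_cong]: "sets latent_law = sets latentM"
  by (simp add: latent_law_def)

lemma emeasure_latent_law:
  assumes X: "X \<in> sets latentM"
  shows "emeasure latent_law X
    = (\<Sum>t\<in>UNIV. \<integral>\<^sup>+ x. latent_kernel (t, x) * indicator (latent_embed -` X) (t, x) \<partial>(\<mu> \<Otimes>\<^sub>M \<mu>))"
proof -
  interpret \<mu>\<mu>: sigma_finite_measure "\<mu> \<Otimes>\<^sub>M \<mu>" by (rule sigma_finite_pair_measure[OF mu_sf mu_sf])
  have pre [measurable]: "latent_embed -` X \<in> sets type_outcome_space"
    using measurable_sets[OF measurable_latent_embed X] space_type_outcome_space by simp
  have [measurable]: "latent_kernel \<in> borel_measurable type_outcome_space"
    by (fact measurable_latent_kernel)
  have "emeasure latent_law X = emeasure (density type_outcome_space latent_kernel) (latent_embed -` X)"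
    unfolding latent_law_def using measurable_latent_embed X space_type_outcome_space
    by (subst emeasure_distr) simp_all
  also have "\<dots> = (\<integral>\<^sup>+ \<omega>. latent_kernel \<omega> * indicator (latent_embed -` X) \<omega> \<partial>type_outcome_space)"
    using pre by (rule emeasure_density[OF measurable_latent_kernel])
  also have "\<dots> = (\<integral>\<^sup>+ t. \<integral>\<^sup>+ x. latent_kernel (t, x) * indicator (latent_embed -` X) (t, x) \<partial>(\<mu> \<Otimes>\<^sub>M \<mu>)
      \<partial>count_space UNIV)"
    unfolding type_outcome_space_def
    by (rule \<mu>\<mu>.nn_integral_fst[symmetric]) (simp flip: type_outcome_space_def)
  also have "\<dots> = (\<Sum>t\<in>UNIV. \<integral>\<^sup>+ x. latent_kernel (t, x) * indicator (latent_embed -` X) (t, x) \<partial>(\<mu> \<Otimes>\<^sub>M \<mu>))"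
    by (rule nn_integral_count_space_finite) simp
  finally show ?thesis .
qed

lemma emeasure_latent_law_vimage_cong:
  "X \<in> sets latentM \<Longrightarrow> X' \<in> sets latentM \<Longrightarrow> latent_embed -` X = latent_embed -` X'
    \<Longrightarrow> emeasure latent_law X = emeasure latent_law X'"
  by (simp add: emeasure_latent_law)

lemma emeasure_latent_law_outcome:
  assumes A: "A \<in> sets borel"
  shows "emeasure latent_law {l. Q (snd l) \<and> outcome d l \<in> A}
    = (\<Sum>t\<in>UNIV. if Q t then (\<integral>\<^sup>+ y \<in> A. type_density d t y \<partial>\<mu>) else 0)"
  unfolding emeasure_latent_law[OF sets_type_outcome_event[OF A]]
proof (rule sum.cong[OF refl])
  fix t :: "bool \<times> bool"
  have A_mu: "A \<in> sets \<mu>" using A mu_sets by simp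
  note marginals = nn_integral_normalized_product_marginals[OF mu_sf measurable_type_density
      measurable_type_density A_mu type_mass_def[symmetric] nn_integral_type_density type_mass_finite]
  have "(\<integral>\<^sup>+ x. latent_kernel (t, x) * indicator (latent_embed -` {l. Q (snd l) \<and> outcome d l \<in> A}) (t, x)
        \<partial>(\<mu> \<Otimes>\<^sub>M \<mu>))
      = (if Q t then \<integral>\<^sup>+ x. type_density True t (fst x) * type_density False t (snd x) / type_mass t
            * indicator A (if d then fst x else snd x) \<partial>(\<mu> \<Otimes>\<^sub>M \<mu>) else 0)"
    by (cases "Q t")
      (auto intro!: nn_integral_cong simp: latent_kernel_def latent_embed_def outcome_def indicator_def)
  also have "\<dots> = (if Q t then (\<integral>\<^sup>+ y \<in> A. type_density d t y \<partial>\<mu>) else 0)"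
    by (cases d) (simp_all add: marginals)
  finally show "(\<integral>\<^sup>+ x. latent_kernel (t, x) * indicator (latent_embed -` {l. Q (snd l) \<and> outcome d l \<in> A}) (t, x)
        \<partial>(\<mu> \<Otimes>\<^sub>M \<mu>))
      = (if Q t then (\<integral>\<^sup>+ y \<in> A. type_density d t y \<partial>\<mu>) else 0)" .
qed

lemma emeasure_latent_law_response:
  assumes A: "A \<in> sets borel"
  shows "emeasure latent_law (response d z A) = ennreal (cprob P A d z)"
proof -
  have "response d z A = {l. (if z then snd (snd l) else fst (snd l)) = d \<and> outcome d l \<in> A}"
    by (auto simp: response_def treatment_def)
  then have "emeasure latent_law (response d z A)
      = (\<Sum>t\<in>UNIV. if (if z then snd t else fst t) = d then (\<integral>\<^sup>+ y \<in> A. type_density d t y \<partial>\<mu>) else 0)"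
    using emeasure_latent_law_outcome[OF A, of "\<lambda>t. (if z then snd t else fst t) = d"] by simp
  also have "\<dots> = ennreal (cprob P A d z)"
    using set_nn_integral_residual_add_taker_density[OF A]
    by (cases d; cases z) (simp_all add: UNIV_bool_pair type_density_def add.commute)
  finally show ?thesis .
qed

lemma emeasure_latent_law_defiers: "emeasure latent_law defiers = ennreal p"
proof -
  have "defiers = {l. (\<lambda>t. t = (True, False)) (snd l) \<and> outcome True l \<in> UNIV}"
    by (auto simp: defiers_def treatment_def)
  then have "emeasure latent_law defiers = (\<integral>\<^sup>+ y. type_density True (True, False) y \<partial>\<mu>)"
    using emeasure_latent_law_outcome[of UNIV "\<lambda>t. t = (True, False)" True] by simp
  then show ?thesis by (simp add: type_mass_def[symmetric] type_mass_defiers)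
qed

lemma prob_space_latent_law: "prob_space latent_law"
proof (rule prob_spaceI)
  have "space latent_law = response True True UNIV \<union> response False True UNIV"
    "response True True UNIV \<inter> response False True UNIV = {}"
    using sets_eq_imp_space_eq[OF sets_latent_law] by (auto simp: response_def)
  then have "emeasure latent_law (space latent_law)
      = emeasure latent_law (response True True UNIV) + emeasure latent_law (response False True UNIV)"
    using sets_response[of UNIV] sets_latent_law by (simp add: plus_emeasure)
  also have "\<dots> = ennreal (cprob P UNIV True True + cprob P UNIV False True)"
    by (simp add: emeasure_latent_law_response ennreal_plus cprob_nonneg)
  finally show "emeasure latent_law (space latent_law) = 1"
    by (simp add: cprob_treatment_sum)
qed

definition instrument_law :: "bool measure" where
  "instrument_law = measure_pmf (bernoulli_pmf (measure P (obs_arm True)))"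

definition full_law :: "omega measure" where
  "full_law = latent_law \<Otimes>\<^sub>M instrument_law"

lemma prob_space_instrument_law: "prob_space instrument_law"
  unfolding instrument_law_def by (rule prob_space_measure_pmf)

lemma emeasure_instrument_law: "emeasure instrument_law {z} = ennreal (measure P (obs_arm z))"
  using arm_prob_pos[of True] arm_prob_pos[of False] measure_obs_arm_False
  unfolding instrument_law_def emeasure_pmf_single by (cases z) simp_all

lemma sets_full_law: "sets full_law = sets omegaM"
  unfolding full_law_def omegaM_def instrument_law_def
  by (rule sets_pair_measure_cong) (simp_all add: sets_latent_law)

lemma space_full_law: "space full_law = UNIV"
  using sets_eq_imp_space_eq[OF sets_full_law] by simp

lemma prob_space_full_law: "prob_space full_law"
  unfolding full_law_def by (rule prob_space_pair[OF prob_space_latent_law prob_space_instrument_law])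

lemma emeasure_full_law_Times:
  "X \<in> sets latentM \<Longrightarrow> emeasure full_law (X \<times> B) = emeasure latent_law X * emeasure instrument_law B"
  unfolding full_law_def
  by (rule sigma_finite_measure.emeasure_pair_measure_Times
      [OF prob_space_imp_sigma_finite[OF prob_space_instrument_law]])
    (simp_all add: sets_latent_law instrument_law_def)

lemma p_df_full_law: "p_df full_law = p"
proof -
  have "emeasure full_law (defiers \<times> UNIV) = ennreal p"
    using emeasure_full_law_Times[OF sets_defiers, of UNIV] emeasure_latent_law_defiers
      prob_space.emeasure_space_1[OF prob_space_instrument_law]
    by (simp add: instrument_law_def)
  then show ?thesis
    using p_nonneg by (simp add: p_df_eq_defiers[OF sets_full_law] measure_def vimage_fst)
qed

lemma measure_full_law_Times:
  "X \<in> sets latentM \<Longrightarrow> measure full_law (X \<times> B) = measure latent_law X * measure instrument_law B"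
  by (simp add: measure_def emeasure_full_law_Times enn2real_mult)

lemma RA_full_law: "RA full_law"
  unfolding RA_def
proof (rule prob_space.indep_setI[OF prob_space_full_law])
  show "{fst -` A \<inter> space full_law | A. A \<in> sets latentM} \<subseteq> sets full_law"
    using sets_fst_vimage[OF sets_full_law] by auto
  show "{Zv -` B \<inter> space full_law | B. B \<in> sets (count_space (UNIV :: bool set))} \<subseteq> sets full_law"
    using measurable_sets[OF measurable_Zv] sets_full_law space_full_law by auto
  have latent_UNIV: "measure latent_law UNIV = 1"
    using prob_space.prob_space[OF prob_space_latent_law] sets_eq_imp_space_eq[OF sets_latent_law]
    by simp
  have instrument_UNIV: "measure instrument_law UNIV = 1"
    using prob_space.prob_space[OF prob_space_instrument_law] by (simp add: instrument_law_def)
  fix a b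
  assume "a \<in> {fst -` A \<inter> space full_law | A. A \<in> sets latentM}"
  then obtain A where A: "A \<in> sets latentM" and a: "a = A \<times> UNIV"
    by (auto simp: space_full_law vimage_fst)
  assume "b \<in> {Zv -` B \<inter> space full_law | B. B \<in> sets (count_space (UNIV :: bool set))}"
  then obtain B where b: "b = UNIV \<times> B"
    by (auto simp: space_full_law Zv_eq_snd vimage_snd)
  have "a \<inter> b = A \<times> B" using a b by auto
  then show "measure full_law (a \<inter> b) = measure full_law a * measure full_law b"
    using measure_full_law_Times[OF A] measure_full_law_Times[OF sets.top[of latentM, simplified]]
      latent_UNIV instrument_UNIV a b
    by simp
qed

lemma ER_full_law: "ER full_law"
proof -
  let ?ER = "\<lambda>l :: latent. fst (fst l) = fst (snd (fst l)) \<and> fst (snd (snd (fst l))) = snd (snd (snd (fst l)))"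
  interpret pair_sigma_finite latent_law instrument_law
    using prob_space_latent_law prob_space_instrument_law
    by (intro pair_sigma_finite.intro prob_space_imp_sigma_finite)
  have sets_ER: "{l \<in> space latentM. ?ER l} \<in> sets latentM"
    unfolding latentM_eq by measurable
  have "AE l in latent_law. ?ER l"
    unfolding latent_law_def
    using measurable_latent_embed
    by (subst AE_distr_iff[OF _ sets_ER]) (simp_all add: latent_embed_def)
  moreover have "{w \<in> space full_law. ?ER (fst w)} \<in> sets full_law"
    using measurable_sets[OF measurable_fst_omegaM sets_ER] sets_full_law space_full_law
    by (simp add: vimage_def)
  ultimately have "AE w in full_law. ?ER (fst w)"
    unfolding full_law_def by (intro AE_pair_measure) auto
  then show ?thesis
    unfolding ER_def by (simp add: Y11_def Y10_def Y01_def Y00_def)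
qed

lemma distr_full_law: "distr full_law obsM obs_map = P"
proof (rule measure_eq_obsM_cells)
  show "sets (distr full_law obsM obs_map) = sets obsM" "sets P = sets obsM"
    by (simp_all add: P_sets)
  fix A :: "real set" and d z :: bool
  assume A: "A \<in> sets borel"
  define T where "T = {l. obs_map (l, z) \<in> obs_cell A d z}"
  have sets_T: "T \<in> sets latentM"
  proof -
    have "(\<lambda>l. (l, z)) \<in> measurable latentM omegaM" unfolding omegaM_def by simp
    from measurable_sets[OF this measurable_sets[OF measurable_obs_map sets_obs_cell[OF A]]]
    show ?thesis by (simp add: T_def vimage_def)
  qed
  have "latent_embed -` T = latent_embed -` response d z A"
    by (auto simp: T_def latent_embed_def response_def obs_map_def obs_cell_def treatment_def outcome_def
        Yobs_def Dobs_def Y11_def Y10_def Y01_def Y00_def D0_def D1_def Zv_def)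
  then have emeasure_T: "emeasure latent_law T = ennreal (cprob P A d z)"
    using emeasure_latent_law_vimage_cong[OF sets_T sets_response[OF A]]
    by (simp add: emeasure_latent_law_response[OF A])
  have "obs_map -` obs_cell A d z \<inter> space full_law = T \<times> {z}"
    by (auto simp: T_def space_full_law obs_map_def obs_cell_def Zv_def)
  moreover have "obs_map \<in> measurable full_law obsM"
    using measurable_obs_map by (simp add: measurable_cong_sets[OF sets_full_law refl])
  ultimately have "emeasure (distr full_law obsM obs_map) (obs_cell A d z) = emeasure full_law (T \<times> {z})"
    by (simp add: emeasure_distr sets_obs_cell[OF A])
  also have "\<dots> = ennreal (cprob P A d z * measure P (obs_arm z))"
    by (simp add: emeasure_full_law_Times[OF sets_T] emeasure_T emeasure_instrument_law
        ennreal_mult cprob_nonneg)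
  also have "\<dots> = emeasure P (obs_cell A d z)"
    using arm_prob_pos[of z] by (simp add: cprob_eq_cell_div_arm P.emeasure_eq_measure)
  finally show "emeasure (distr full_law obsM obs_map) (obs_cell A d z) = emeasure P (obs_cell A d z)" .
qed

lemma p_mem_identified_set: "p \<in> identified_set_pdf P"
  unfolding identified_set_pdf_def mem_Collect_eq
  by (intro exI[of _ full_law])
    (simp add: prob_space_full_law sets_full_law RA_full_law ER_full_law distr_full_law p_df_full_law)

end

lemma (in observed_law) identified_set_pdf_eq: "identified_set_pdf P = {lower_pdf P .. upper_pdf P}"
proof (intro antisym subsetI)
  fix x assume "x \<in> identified_set_pdf P"
  then obtain L where L: "prob_space L" "sets L = sets omegaM" "RA L" "ER L" "distr L obsM obs_map = P"
    and x: "x = p_df L"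
    unfolding identified_set_pdf_def by blast
  note bounds = p_df_bounds[OF L arm_prob_pos]
  have "lower_pdf P \<le> x"
    using bounds(1) x by (intro lower_pdf_le) (simp_all add: p_df_def)
  moreover have "x \<le> upper_pdf P"
    using bounds(2,3) x by (simp add: upper_pdf_def cprobD_def)
  ultimately show "x \<in> {lower_pdf P .. upper_pdf P}" by simp
next
  fix x assume "x \<in> {lower_pdf P .. upper_pdf P}"
  then interpret defier_share P \<mu> f x by unfold_locales simp_all
  show "x \<in> identified_set_pdf P" by (fact p_mem_identified_set)
qed

theorem proposition1:
  fixes P :: "obs measure" and \<mu> :: "real measure"
    and f :: "real \<Rightarrow> bool \<Rightarrow> bool \<Rightarrow> real"
  assumes P_prob: "prob_space P"
    and P_sets: "sets P = sets obsM"
    and Z_nondeg: "0 < measure P {(y, d, z). z}" "measure P {(y, d, z). z} < 1"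
    and mu_sets: "sets \<mu> = sets borel"
    and mu_sf: "sigma_finite_measure \<mu>"
    and f_meas: "\<And>d z. (\<lambda>y. f y d z) \<in> borel_measurable borel"
    and f_nonneg: "\<And>y d z. 0 \<le> f y d z"
    and f_density: "\<And>A d z. A \<in> sets borel \<Longrightarrow>
          ennreal (cprob P A d z) = (\<integral>\<^sup>+ y \<in> A. ennreal (f y d z) \<partial>\<mu>)"
  shows "identified_set_pdf P =
           (if (\<forall>d. (\<integral>\<^sup>+ y. ennreal (max (f y d False) (f y d True)) \<partial>\<mu>) \<le> 1)
            then {lower_pdf P .. upper_pdf P} else {})
         \<and> (identified_set_pdf P \<noteq> {} \<longrightarrow>
              (\<forall>d. (\<integral>\<^sup>+ y. ennreal (max (f y d False) (f y d True)) \<partial>\<mu>) \<le> 1))"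
proof -
  interpret observed_law P \<mu> f
    by (rule observed_law.intro[OF P_prob P_sets Z_nondeg mu_sets mu_sf f_meas f_density])
  have "identified_set_pdf P = {}"
    if "\<not> (\<integral>\<^sup>+ y. ennreal (max (f y d False) (f y d True)) \<partial>\<mu>) \<le> 1" for d
    using upper_pdf_less_lower_pdf[OF that] by (simp add: identified_set_pdf_eq)
  then show ?thesis
    by (auto simp: identified_set_pdf_eq)
qed

end
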